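(* Let $G$ be a simple dimension group with exactly $n>1$ pure (extremal) normalized traces. If either $\operatorname{rank}(G/\mathrm{Inf}(G))=n$, or $\operatorname{rank}(G/\mathrm{Inf}(G))=n+1$ and $G/\mathrm{Inf}(G)$ is finitely generated, then $G$ is globally irrationally miscible.
   Context: A dimension group is an unperforated partially ordered abelian group with the Riesz interpolation property; simple means no nontrivial order ideals. For an order unit $u$, $S(G,u)$ is the compact convex set of states (homomorphisms $\sigma:G\to\mathbb R$, $\sigma(G^+)\ge0$, $\sigma(u)=1$), and pure traces are its extreme points. $\mathrm{Inf}(G)=\{g:-\epsilon u\le g\le\epsilon u\ \forall\epsilon\in\mathbb Q_{>0}\}$. $\operatorname{rank}H=\dim_{\mathbb Q}(H\otimes\mathbb Q)$. $J(G,u)=\{g:\sigma\mapsto\sigma(g)\text{ constant on }S(G,u)\}$ with $\Phi(g)$ the constant; $(G,u)$ is irrationally miscible if $\Phi(J(G,u))\subseteq\mathbb Q$, and $G$ is globally irrationally miscible if this holds for all order units $u$. *)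

theory Defs
  imports Main "HOL.Rat" "HOL.Real"
begin

text \<open>A partially ordered abelian group is modelled as a type of class ab_group_add
  (the whole type is the group G) together with its positive cone P = G+.
  We write a \<le>P b for b - a in P.\<close>

primrec nsmul :: "nat \<Rightarrow> 'g::ab_group_add \<Rightarrow> 'g" where
  "nsmul 0 g = 0"
| "nsmul (Suc n) g = g + nsmul n g"

definition zsmul :: "int \<Rightarrow> 'g::ab_group_add \<Rightarrow> 'g" where
  "zsmul k g = (if k \<ge> 0 then nsmul (nat k) g else - nsmul (nat (- k)) g)"

definition pleq :: "'g::ab_group_add set \<Rightarrow> 'g \<Rightarrow> 'g \<Rightarrow> bool" where
  "pleq P a b \<longleftrightarrow> b - a \<in> P"

definition po_group :: "'g::ab_group_add set \<Rightarrow> bool" where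
  "po_group P \<longleftrightarrow> 0 \<in> P \<and> (\<forall>a\<in>P. \<forall>b\<in>P. a + b \<in> P) \<and> (\<forall>a. a \<in> P \<and> - a \<in> P \<longrightarrow> a = 0)"

definition unperforated :: "'g::ab_group_add set \<Rightarrow> bool" where
  "unperforated P \<longleftrightarrow> (\<forall>n g. n > 0 \<and> nsmul n g \<in> P \<longrightarrow> g \<in> P)"

definition riesz_interpolation :: "'g::ab_group_add set \<Rightarrow> bool" where
  "riesz_interpolation P \<longleftrightarrow>
    (\<forall>a1 a2 b1 b2. pleq P a1 b1 \<and> pleq P a1 b2 \<and> pleq P a2 b1 \<and> pleq P a2 b2 \<longrightarrow>
       (\<exists>c. pleq P a1 c \<and> pleq P a2 c \<and> pleq P c b1 \<and> pleq P c b2))"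

definition dimension_group :: "'g::ab_group_add set \<Rightarrow> bool" where
  "dimension_group P \<longleftrightarrow> po_group P \<and> unperforated P \<and> riesz_interpolation P"

definition order_ideal :: "'g::ab_group_add set \<Rightarrow> 'g set \<Rightarrow> bool" where
  "order_ideal P I \<longleftrightarrow> 0 \<in> I \<and> (\<forall>a\<in>I. \<forall>b\<in>I. a - b \<in> I)
     \<and> (\<forall>a b. pleq P 0 a \<and> pleq P a b \<and> b \<in> I \<longrightarrow> a \<in> I)
     \<and> (\<forall>g\<in>I. \<exists>a b. a \<in> I \<inter> P \<and> b \<in> I \<inter> P \<and> g = a - b)"

definition simple_group :: "'g::ab_group_add set \<Rightarrow> bool" where
  "simple_group P \<longleftrightarrow> (\<forall>I. order_ideal P I \<longrightarrow> I = {0} \<or> I = UNIV)"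

definition order_unit :: "'g::ab_group_add set \<Rightarrow> 'g \<Rightarrow> bool" where
  "order_unit P u \<longleftrightarrow> u \<in> P \<and> (\<forall>g. \<exists>n. pleq P g (nsmul n u))"

definition states :: "'g::ab_group_add set \<Rightarrow> 'g \<Rightarrow> ('g \<Rightarrow> real) set" where
  "states P u = {\<sigma>. (\<forall>a b. \<sigma> (a + b) = \<sigma> a + \<sigma> b) \<and> (\<forall>a\<in>P. \<sigma> a \<ge> 0) \<and> \<sigma> u = 1}"

definition extreme_points :: "('g \<Rightarrow> real) set \<Rightarrow> ('g \<Rightarrow> real) set" where
  "extreme_points S = {\<sigma>\<in>S. \<forall>a\<in>S. \<forall>b\<in>S. \<forall>t::real. 0 < t \<and> t < 1 \<and>
       \<sigma> = (\<lambda>x. t * a x + (1 - t) * b x) \<longrightarrow> a = b}"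

definition pure_traces :: "'g::ab_group_add set \<Rightarrow> 'g \<Rightarrow> ('g \<Rightarrow> real) set" where
  "pure_traces P u = extreme_points (states P u)"

text \<open>Inf(G) = {g. -eps u \<le> g \<le> eps u for all rational eps > 0}; with eps = p/q this
  reads -p u \<le> q g \<le> p u.\<close>
definition infinitesimals :: "'g::ab_group_add set \<Rightarrow> 'g \<Rightarrow> 'g set" where
  "infinitesimals P u = {g. \<forall>p q::nat. p > 0 \<and> q > 0 \<longrightarrow>
      pleq P (- nsmul p u) (nsmul q g) \<and> pleq P (nsmul q g) (nsmul p u)}"

text \<open>Rank of the quotient G/I: maximal number of Z-linearly independent elements modulo I
  (= dim_Q((G/I) \<otimes> Q)). \<close>
definition indep_mod :: "'g::ab_group_add set \<Rightarrow> nat \<Rightarrow> (nat \<Rightarrow> 'g) \<Rightarrow> bool" where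
  "indep_mod I k x \<longleftrightarrow> (\<forall>m::nat \<Rightarrow> int. (\<Sum>i<k. zsmul (m i) (x i)) \<in> I \<longrightarrow> (\<forall>i<k. m i = 0))"

definition quotient_rank_eq :: "'g::ab_group_add set \<Rightarrow> nat \<Rightarrow> bool" where
  "quotient_rank_eq I k \<longleftrightarrow> (\<exists>x. indep_mod I k x) \<and> \<not> (\<exists>x. indep_mod I (Suc k) x)"

definition quotient_fin_gen :: "'g::ab_group_add set \<Rightarrow> bool" where
  "quotient_fin_gen I \<longleftrightarrow> (\<exists>F. finite F \<and> (\<forall>g. \<exists>m::'g \<Rightarrow> int. g - (\<Sum>f\<in>F. zsmul (m f) f) \<in> I))"

definition irrationally_miscible :: "'g::ab_group_add set \<Rightarrow> 'g \<Rightarrow> bool" where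
  "irrationally_miscible P u \<longleftrightarrow>
     (\<forall>g. (\<forall>\<sigma>\<in>states P u. \<forall>\<tau>\<in>states P u. \<sigma> g = \<tau> g) \<longrightarrow>
          (\<forall>\<sigma>\<in>states P u. \<sigma> g \<in> \<rat>))"

definition globally_irrationally_miscible :: "'g::ab_group_add set \<Rightarrow> bool" where
  "globally_irrationally_miscible P \<longleftrightarrow> (\<forall>u. order_unit P u \<longrightarrow> irrationally_miscible P u)"

end

(* Let f_0, ..., f_(n-1) be the pure traces of (G, u0). By Riesz decomposition, the positive
   functionals on G form a lattice, and distinct pure traces are disjoint in it; hence the f_i
   are linearly independent, and on a simple group a nonzero real combination of two or more of
   them takes arbitrarily small nonzero values, so no multiple of it is integer valued.
   Every state of (G, u) is a rescaled state of (G, u0), so if g has the constant value c on the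
   states of (G, u) then f_i g = c * f_i u for all i. Choose functionals a_j in the span of the
   f_i and points y_0 = u, ..., y_(n-1) with a_j (y_l) = [j = l]; the a_j vanish on Inf(G).
   If rank (G/Inf) = n, a relation among y_0, ..., y_(n-1), g modulo Inf(G), read off in the
   coordinates a_j, shows that c is rational. If rank (G/Inf) = n + 1 and c were irrational,
   the relations among y_0, ..., y_(n-1), g, x would make a_1 rational valued, and finite
   generation of G/Inf(G) would make a multiple of a_1 integer valued. *)

theory Submission
  imports Defs HOL.Modules
begin

section \<open>Positive functionals\<close>

definition positive_functional :: "'g::ab_group_add set \<Rightarrow> ('g \<Rightarrow> real) \<Rightarrow> bool" where
  "positive_functional P f \<longleftrightarrow> additive f \<and> (\<forall>a\<in>P. 0 \<le> f a)"

definition le_on :: "'g set \<Rightarrow> ('g \<Rightarrow> real) \<Rightarrow> ('g \<Rightarrow> real) \<Rightarrow> bool" where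
  "le_on P f g \<longleftrightarrow> (\<forall>a\<in>P. f a \<le> g a)"

lemma nsmul_add: "nsmul (m + k) a = nsmul m a + nsmul k a"
  by (induction m) (auto simp: algebra_simps)

lemma additive_nsmul: "additive f \<Longrightarrow> f (nsmul n a) = real n * f a"
  by (induction n) (auto simp: additive.zero additive.add algebra_simps)

lemma additive_zsmul: "additive f \<Longrightarrow> f (zsmul k a) = real_of_int k * f a"
  by (auto simp: zsmul_def additive_nsmul additive.minus)

lemma additive_lin_comb:
  fixes f :: "'i \<Rightarrow> 'g::ab_group_add \<Rightarrow> real"
  assumes "\<And>i. i \<in> A \<Longrightarrow> additive (f i)"
  shows "additive (\<lambda>x. \<Sum>i\<in>A. c i * f i x)"
  by (rule additive.intro) (simp add: assms additive.add distrib_left sum.distrib)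

lemma additive_scale: "additive f \<Longrightarrow> additive (\<lambda>x. c * f x :: real)"
  by (rule additive.intro) (simp add: additive.add distrib_left)

lemma positive_functional_lin_comb:
  "(\<And>i. i \<in> A \<Longrightarrow> positive_functional P (f i)) \<Longrightarrow> (\<And>i. i \<in> A \<Longrightarrow> 0 \<le> c i)
    \<Longrightarrow> positive_functional P (\<lambda>x. \<Sum>i\<in>A. c i * f i x)"
  unfolding positive_functional_def by (auto intro!: additive_lin_comb sum_nonneg)

lemma positive_functional_scale:
  "positive_functional P f \<Longrightarrow> 0 \<le> c \<Longrightarrow> positive_functional P (\<lambda>x. c * f x)"
  using positive_functional_lin_comb[of "{()}" P "\<lambda>_. f" "\<lambda>_. c"] by simp

lemma positive_functional_diff:
  "additive f \<Longrightarrow> additive g \<Longrightarrow> le_on P g f \<Longrightarrow> positive_functional P (\<lambda>x. f x - g x)"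
  unfolding positive_functional_def le_on_def by (auto intro!: additive.intro simp: additive.add)

lemma states_additive: "\<sigma> \<in> states P u \<Longrightarrow> additive \<sigma>"
  unfolding states_def by (auto intro: additive.intro)

lemma states_positive_functional: "\<sigma> \<in> states P u \<Longrightarrow> positive_functional P \<sigma>"
  unfolding states_def positive_functional_def by (auto intro: additive.intro)

lemma states_unit: "\<sigma> \<in> states P u \<Longrightarrow> \<sigma> u = 1"
  unfolding states_def by blast

lemma pure_traces_states: "\<tau> \<in> pure_traces P u \<Longrightarrow> \<tau> \<in> states P u"
  unfolding pure_traces_def extreme_points_def by blast

lemma normalized_positive_functional_state:
  "positive_functional P h \<Longrightarrow> 0 < h u \<Longrightarrow> (\<lambda>x. h x / h u) \<in> states P u"
  unfolding positive_functional_def states_def by (auto simp: additive.add add_divide_distrib)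

lemma nsmul_mem: "po_group P \<Longrightarrow> a \<in> P \<Longrightarrow> nsmul n a \<in> P"
  unfolding po_group_def by (induction n) auto

section \<open>Riesz decomposition of positive functionals\<close>

locale unital_riesz_group =
  fixes P :: "'g::ab_group_add set" and u0 :: 'g
  assumes po_group: "po_group P" and riesz: "riesz_interpolation P" and order_unit: "order_unit P u0"
begin

lemma zero_mem: "0 \<in> P"
  using po_group unfolding po_group_def by blast

lemma add_mem: "a \<in> P \<Longrightarrow> b \<in> P \<Longrightarrow> a + b \<in> P"
  using po_group unfolding po_group_def by blast

lemma unit_mem: "u0 \<in> P"
  using order_unit unfolding order_unit_def by blast

lemma below_multiple_of_unit: "\<exists>m. nsmul m u0 - x \<in> P"
  using order_unit unfolding order_unit_def pleq_def by blast

lemma diff_of_positives: "\<exists>p\<in>P. \<exists>q\<in>P. x = p - q"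
proof -
  obtain m where "nsmul m u0 + x \<in> P"
    using below_multiple_of_unit[of "- x"] by auto
  moreover have "nsmul m u0 \<in> P"
    using nsmul_mem[OF po_group unit_mem] .
  ultimately show ?thesis
    by (metis add_diff_cancel_left')
qed

lemma positive_functional_vanishing_at_unit:
  assumes h: "positive_functional P h" and "h u0 = 0"
  shows "h x = 0"
proof -
  have add: "additive h"
    using h unfolding positive_functional_def by blast
  obtain m k where "nsmul m u0 - x \<in> P" "nsmul k u0 + x \<in> P"
    using below_multiple_of_unit[of x] below_multiple_of_unit[of "- x"] by auto
  then have "0 \<le> h (nsmul m u0 - x)" "0 \<le> h (nsmul k u0 + x)"
    using h unfolding positive_functional_def by blast+
  then show ?thesis
    using \<open>h u0 = 0\<close> by (simp add: additive.diff[OF add] additive.add[OF add] additive_nsmul[OF add])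
qed

lemma riesz_decomposition:
  assumes "y \<in> P" "x1 \<in> P" "x2 \<in> P" "x1 + x2 - y \<in> P"
  obtains y1 where "y1 \<in> P" "x1 - y1 \<in> P" "y - y1 \<in> P" "x2 - (y - y1) \<in> P"
proof -
  have "pleq P 0 y" "pleq P 0 x1" "pleq P (y - x2) y" "pleq P (y - x2) x1"
    using assms unfolding pleq_def by (auto simp: algebra_simps)
  then obtain c where c: "pleq P 0 c" "pleq P (y - x2) c" "pleq P c y" "pleq P c x1"
    using riesz unfolding riesz_interpolation_def by blast
  have "x2 - (y - c) \<in> P"
    using c(2) unfolding pleq_def by (simp add: algebra_simps)
  with c show thesis
    by (intro that[of c]) (auto simp: pleq_def)
qed

lemma additive_extension_from_cone:
  fixes m :: "'g \<Rightarrow> real"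
  assumes add: "\<And>a b. a \<in> P \<Longrightarrow> b \<in> P \<Longrightarrow> m (a + b) = m a + m b"
  obtains M where "additive M" "\<And>a. a \<in> P \<Longrightarrow> M a = m a"
proof -
  have "\<forall>x. \<exists>pq. fst pq \<in> P \<and> snd pq \<in> P \<and> x = fst pq - snd pq"
    using diff_of_positives by fastforce
  then obtain rep where rep: "\<And>x. fst (rep x) \<in> P \<and> snd (rep x) \<in> P \<and> x = fst (rep x) - snd (rep x)"
    by metis
  have well_defined: "m p - m q = m p' - m q'"
    if "p \<in> P" "q \<in> P" "p' \<in> P" "q' \<in> P" "p - q = p' - q'" for p q p' q'
  proof -
    have "p + q' = p' + q"
      using that(5) by (simp add: algebra_simps)
    then have "m p + m q' = m p' + m q"
      using add that(1-4) by metis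
    then show ?thesis
      by linarith
  qed
  define M where "M x = m (fst (rep x)) - m (snd (rep x))" for x
  have M_diff: "M (p - q) = m p - m q" if "p \<in> P" "q \<in> P" for p q
    unfolding M_def using rep[of "p - q"] that by (intro well_defined) auto
  show thesis
  proof
    show "additive M"
    proof
      fix x y
      obtain p q p' q' where pq: "p \<in> P" "q \<in> P" "x = p - q" "p' \<in> P" "q' \<in> P" "y = p' - q'"
        using diff_of_positives by meson
      then have "x + y = (p + p') - (q + q')"
        by (simp add: diff_add_eq add_diff_eq diff_diff_eq)
      then have "M (x + y) = m (p + p') - m (q + q')"
        using M_diff[OF add_mem[OF pq(1,4)] add_mem[OF pq(2,5)]] by simp
      also have "\<dots> = M x + M y"
        using M_diff pq add by simp
      finally show "M (x + y) = M x + M y" .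
    qed
    show "M a = m a" if "a \<in> P" for a
      using M_diff[OF that zero_mem] add[OF zero_mem zero_mem] by simp
  qed
qed

text \<open>The Riesz--Kantorovich formula for the infimum of f and g; only its values on P matter.\<close>

definition meet :: "('g \<Rightarrow> real) \<Rightarrow> ('g \<Rightarrow> real) \<Rightarrow> 'g \<Rightarrow> real" where
  "meet f g a = Inf {f y + g (a - y) | y. y \<in> P \<and> a - y \<in> P}"

context
  fixes f g :: "'g \<Rightarrow> real"
  assumes f: "positive_functional P f" and g: "positive_functional P g"
begin

lemma meet_le: "y \<in> P \<Longrightarrow> a - y \<in> P \<Longrightarrow> meet f g a \<le> f y + g (a - y)"
  unfolding meet_def using f g
  by (intro cInf_lower bdd_belowI[of _ 0]) (auto simp: positive_functional_def)

lemma meet_greatest: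
  "a \<in> P \<Longrightarrow> (\<And>y. y \<in> P \<Longrightarrow> a - y \<in> P \<Longrightarrow> t \<le> f y + g (a - y)) \<Longrightarrow> t \<le> meet f g a"
  unfolding meet_def using zero_mem by (intro cInf_greatest) force+

lemma meet_approx:
  assumes "a \<in> P" "0 < e"
  obtains y where "y \<in> P" "a - y \<in> P" "f y + g (a - y) < meet f g a + e"
  using meet_greatest[OF assms(1), of "meet f g a + e"] assms(2) by force

lemma meet_nonneg: "a \<in> P \<Longrightarrow> 0 \<le> meet f g a"
  using f g by (intro meet_greatest) (auto simp: positive_functional_def)

lemma meet_le_left: "a \<in> P \<Longrightarrow> meet f g a \<le> f a"
  using meet_le[of a a] zero_mem g by (simp add: positive_functional_def additive.zero)

lemma meet_le_right: "a \<in> P \<Longrightarrow> meet f g a \<le> g a"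
  using meet_le[of 0 a] zero_mem f by (simp add: positive_functional_def additive.zero)

lemma meet_add_le:
  assumes a: "a \<in> P" and b: "b \<in> P"
  shows "meet f g (a + b) \<le> meet f g a + meet f g b"
proof -
  have "meet f g (a + b) - (f y2 + g (b - y2)) \<le> meet f g a"
    if y2: "y2 \<in> P" "b - y2 \<in> P" for y2
  proof (rule meet_greatest[OF a])
    fix y1 assume y1: "y1 \<in> P" "a - y1 \<in> P"
    have split: "a + b - (y1 + y2) = (a - y1) + (b - y2)"
      by (simp add: algebra_simps)
    have "meet f g (a + b) \<le> f (y1 + y2) + g (a + b - (y1 + y2))"
      using y1 y2 add_mem by (intro meet_le) (auto simp: split)
    then show "meet f g (a + b) - (f y2 + g (b - y2)) \<le> f y1 + g (a - y1)"
      using f g unfolding split by (simp add: positive_functional_def additive.add)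
  qed
  then have "meet f g (a + b) - meet f g a \<le> meet f g b"
    by (intro meet_greatest[OF b]) force
  then show ?thesis
    by simp
qed

lemma meet_add_ge:
  assumes a: "a \<in> P" and b: "b \<in> P"
  shows "meet f g a + meet f g b \<le> meet f g (a + b)"
proof (rule meet_greatest)
  show "a + b \<in> P"
    using a b add_mem by blast
  fix y assume y: "y \<in> P" "a + b - y \<in> P"
  obtain y1 where y1: "y1 \<in> P" "a - y1 \<in> P" "y - y1 \<in> P" "b - (y - y1) \<in> P"
    using riesz_decomposition[OF y(1) a b y(2)] by blast
  have "meet f g a + meet f g b \<le> (f y1 + g (a - y1)) + (f (y - y1) + g (b - (y - y1)))"
    using meet_le[OF y1(1,2)] meet_le[OF y1(3,4)] by simp
  also have "\<dots> = f (y1 + (y - y1)) + g ((a - y1) + (b - (y - y1)))"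
    using f g unfolding positive_functional_def by (simp only: additive.add)
  also have "\<dots> = f y + g (a + b - y)"
    by (simp add: algebra_simps)
  finally show "meet f g a + meet f g b \<le> f y + g (a + b - y)" .
qed

lemma meet_add: "a \<in> P \<Longrightarrow> b \<in> P \<Longrightarrow> meet f g (a + b) = meet f g a + meet f g b"
  by (rule order_antisym[OF meet_add_le meet_add_ge])

lemma positive_functional_meet:
  obtains M where "positive_functional P M" "\<And>a. a \<in> P \<Longrightarrow> M a = meet f g a"
proof -
  obtain M where "additive M" "\<And>a. a \<in> P \<Longrightarrow> M a = meet f g a"
    using additive_extension_from_cone[of "meet f g"] meet_add by blast
  with meet_nonneg show thesis
    by (intro that[of M]) (auto simp: positive_functional_def)
qed

end

lemma positive_functional_decomposition:
  assumes h: "positive_functional P h" and g1: "positive_functional P g1"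
    and g2: "positive_functional P g2" and le: "le_on P h (\<lambda>x. g1 x + g2 x)"
  obtains h1 h2 where "positive_functional P h1" "positive_functional P h2"
    "\<And>x. h x = h1 x + h2 x" "le_on P h1 g1" "le_on P h2 g2"
proof -
  obtain M where M: "positive_functional P M" "\<And>a. a \<in> P \<Longrightarrow> M a = meet h g1 a"
    using positive_functional_meet[OF h g1] by blast
  have add: "additive h" "additive g1" "additive g2" "additive M"
    using h g1 g2 M(1) by (simp_all add: positive_functional_def)
  have "M a \<le> h a" "M a \<le> g1 a" if "a \<in> P" for a
    using meet_le_left[OF h g1 that] meet_le_right[OF h g1 that] M(2)[OF that] by simp_all
  moreover have "h a - M a \<le> g2 a" if a: "a \<in> P" for a
  proof -
    have "h a - g2 a \<le> h y + g1 (a - y)" if y: "y \<in> P" "a - y \<in> P" for y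
    proof -
      have "h (a - y) \<le> g1 (a - y) + g2 (a - y)" "0 \<le> g2 y"
        using le y g2 unfolding le_on_def positive_functional_def by blast+
      then show ?thesis
        by (simp add: additive.diff[OF add(1)] additive.diff[OF add(3)])
    qed
    then show ?thesis
      using meet_greatest[OF h g1 a] M(2)[OF a] by fastforce
  qed
  ultimately show thesis
    using M(1) add by (intro that[of M "\<lambda>x. h x - M x"] positive_functional_diff) (auto simp: le_on_def)
qed

lemma meet_zero_approx:
  assumes f: "positive_functional P f" and g: "positive_functional P g"
    and disjoint: "\<And>h. positive_functional P h \<Longrightarrow> le_on P h f \<Longrightarrow> le_on P h g \<Longrightarrow> h = (\<lambda>_. 0)"
    and a: "a \<in> P" and e: "0 < e"
  obtains y where "y \<in> P" "a - y \<in> P" "f y + g (a - y) < e"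
proof -
  obtain M where M: "positive_functional P M" "\<And>a. a \<in> P \<Longrightarrow> M a = meet f g a"
    using positive_functional_meet[OF f g] by blast
  have "M b \<le> f b" "M b \<le> g b" if "b \<in> P" for b
    using meet_le_left[OF f g that] meet_le_right[OF f g that] M(2)[OF that] by simp_all
  then have "M = (\<lambda>_. 0)"
    by (intro disjoint M(1)) (auto simp: le_on_def)
  then show thesis
    using meet_approx[OF f g a e] M(2)[OF a] that by auto
qed

subsection \<open>Pure traces\<close>

lemma pure_trace_split:
  assumes \<tau>: "\<tau> \<in> pure_traces P u0" and h: "positive_functional P h" and k: "positive_functional P k"
    and sum: "\<And>x. h x + k x = c * \<tau> x" and pos: "0 < h u0" "0 < k u0"
  shows "h = (\<lambda>x. h u0 * \<tau> x)"
proof -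
  have "c = h u0 + k u0"
    using sum[of u0] states_unit[OF pure_traces_states[OF \<tau>]] by simp
  define t where "t = h u0 / c"
  have "0 < c" "0 < t" "t < 1" "1 - t = k u0 / c"
    using pos \<open>c = _\<close> by (auto simp: t_def field_simps)
  have \<tau>_comb: "\<tau> = (\<lambda>x. t * (h x / h u0) + (1 - t) * (k x / k u0))"
  proof
    fix x
    have "t * (h x / h u0) + (1 - t) * (k x / k u0) = (h x + k x) / c"
      using pos unfolding \<open>1 - t = _\<close> by (simp add: t_def add_divide_distrib)
    then show "\<tau> x = t * (h x / h u0) + (1 - t) * (k x / k u0)"
      using \<open>0 < c\<close> by (simp add: sum)
  qed
  have "\<forall>a\<in>states P u0. \<forall>b\<in>states P u0. \<forall>t. 0 < t \<and> t < 1 \<and>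
      \<tau> = (\<lambda>x. t * a x + (1 - t) * b x) \<longrightarrow> a = b"
    using \<tau> unfolding pure_traces_def extreme_points_def by blast
  from this[rule_format, OF normalized_positive_functional_state[OF h pos(1)]
      normalized_positive_functional_state[OF k pos(2)], of t]
  have same: "(\<lambda>x. h x / h u0) = (\<lambda>x. k x / k u0)"
    using \<open>0 < t\<close> \<open>t < 1\<close> \<tau>_comb by blast
  have "\<tau> x = (t + (1 - t)) * (h x / h u0)" for x
    unfolding distrib_right using fun_cong[OF \<tau>_comb, of x] fun_cong[OF same, of x] by simp
  with pos show ?thesis
    by auto
qed

lemma le_multiple_of_pure_trace:
  assumes \<tau>: "\<tau> \<in> pure_traces P u0" and h: "positive_functional P h"
    and le: "le_on P h (\<lambda>x. c * \<tau> x)"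
  shows "h = (\<lambda>x. h u0 * \<tau> x)"
proof -
  have \<tau>_state: "\<tau> \<in> states P u0"
    using \<tau> by (rule pure_traces_states)
  define k where "k x = c * \<tau> x - h x" for x
  have k: "positive_functional P k"
    unfolding k_def using h le states_additive[OF \<tau>_state]
    by (intro positive_functional_diff additive_scale) (auto simp: positive_functional_def)
  have "0 \<le> h u0" "0 \<le> k u0"
    using h k unit_mem by (auto simp: positive_functional_def)
  then consider "h u0 = 0" | "k u0 = 0" | "0 < h u0" "0 < k u0"
    by linarith
  then show ?thesis
  proof cases
    case 1
    then show ?thesis
      using positive_functional_vanishing_at_unit[OF h] by auto
  next
    case 2
    then have "h x = c * \<tau> x" for x
      using positive_functional_vanishing_at_unit[OF k, of x] by (simp add: k_def)
    then show ?thesis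
      using states_unit[OF \<tau>_state] by auto
  next
    case 3
    show ?thesis
      by (rule pure_trace_split[OF \<tau> h k _ 3, of c]) (simp add: k_def)
  qed
qed

lemma le_on_summands:
  assumes "positive_functional P h1" "positive_functional P h2" "le_on P (\<lambda>x. h1 x + h2 x) g"
  shows "le_on P h1 g" "le_on P h2 g"
  using assms unfolding le_on_def positive_functional_def by (smt (verit))+

lemma pure_traces_positive: "\<rho> \<in> pure_traces P u0 \<Longrightarrow> positive_functional P \<rho>"
  by (intro states_positive_functional pure_traces_states)

lemma pure_trace_disjoint_from_others:
  assumes "finite T" "T \<subseteq> pure_traces P u0" and \<tau>: "\<tau> \<in> pure_traces P u0" "\<tau> \<notin> T"
    and "\<And>\<sigma>. \<sigma> \<in> T \<Longrightarrow> 0 \<le> c \<sigma>" and "positive_functional P h"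
    and "le_on P h (\<lambda>x. r * \<tau> x)" and "le_on P h (\<lambda>x. \<Sum>\<sigma>\<in>T. c \<sigma> * \<sigma> x)"
  shows "h = (\<lambda>_. 0)"
  using assms(1,2,4-8)
proof (induction T arbitrary: h rule: finite_induct)
  case empty
  then have "h u0 = 0"
    using unit_mem unfolding le_on_def positive_functional_def by (simp add: order_antisym)
  then show ?case
    using positive_functional_vanishing_at_unit[OF empty.prems(4)] by auto
next
  case (insert \<sigma> T)
  have \<sigma>: "\<sigma> \<in> pure_traces P u0" "\<sigma> \<noteq> \<tau>" and T: "T \<subseteq> pure_traces P u0"
    using insert.prems(1,2) by auto
  have "positive_functional P (\<lambda>x. c \<sigma> * \<sigma> x)"
    using insert.prems(3) \<sigma>(1) by (simp add: positive_functional_scale pure_traces_positive)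
  moreover have "positive_functional P (\<lambda>x. \<Sum>\<rho>\<in>T. c \<rho> * \<rho> x)"
    using insert.prems(3) T pure_traces_positive by (auto intro!: positive_functional_lin_comb)
  moreover have "le_on P h (\<lambda>x. c \<sigma> * \<sigma> x + (\<Sum>\<rho>\<in>T. c \<rho> * \<rho> x))"
    using insert.prems(6) insert.hyps by (simp add: le_on_def)
  ultimately obtain h1 h2 where h12: "positive_functional P h1" "positive_functional P h2"
      "\<And>x. h x = h1 x + h2 x" "le_on P h1 (\<lambda>x. c \<sigma> * \<sigma> x)" "le_on P h2 (\<lambda>x. \<Sum>\<rho>\<in>T. c \<rho> * \<rho> x)"
    using positive_functional_decomposition[OF insert.prems(4)] by blast
  have "le_on P (\<lambda>x. h1 x + h2 x) (\<lambda>x. r * \<tau> x)"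
    using insert.prems(5) by (simp add: le_on_def h12(3))
  then have h1_le: "le_on P h1 (\<lambda>x. r * \<tau> x)" and h2_le: "le_on P h2 (\<lambda>x. r * \<tau> x)"
    using le_on_summands[OF h12(1,2)] by auto
  have "h2 = (\<lambda>_. 0)"
    using insert.IH[OF T _ _ h12(2) h2_le h12(5)] insert.prems(2,3) by blast
  have h1_\<sigma>: "h1 = (\<lambda>x. h1 u0 * \<sigma> x)" and h1_\<tau>: "h1 = (\<lambda>x. h1 u0 * \<tau> x)"
    using le_multiple_of_pure_trace[OF \<sigma>(1) h12(1,4)] le_multiple_of_pure_trace[OF \<tau>(1) h12(1) h1_le] .
  have "h1 u0 = 0"
  proof (rule ccontr)
    assume "h1 u0 \<noteq> 0"
    then have "\<sigma> x = \<tau> x" for x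
      using fun_cong[OF h1_\<sigma>, of x] fun_cong[OF h1_\<tau>, of x] by simp
    then show False
      using \<sigma>(2) by blast
  qed
  with h1_\<sigma> \<open>h2 = (\<lambda>_. 0)\<close> h12(3) show ?case
    by auto
qed

lemma pure_traces_linearly_independent:
  assumes T: "finite T" "T \<subseteq> pure_traces P u0"
    and zero: "\<And>x. (\<Sum>\<sigma>\<in>T. c \<sigma> * \<sigma> x) = 0" and \<tau>: "\<tau> \<in> T"
  shows "c \<tau> = 0"
proof (rule ccontr)
  assume "c \<tau> \<noteq> 0"
  define d where "d \<sigma> = - c \<sigma> / c \<tau>" for \<sigma>
  define B where "B = {\<sigma> \<in> T - {\<tau>}. 0 < d \<sigma>}"
  have \<tau>_eq: "\<tau> x = (\<Sum>\<sigma>\<in>T - {\<tau>}. d \<sigma> * \<sigma> x)" for x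
  proof -
    have "c \<tau> * \<tau> x + (\<Sum>\<sigma>\<in>T - {\<tau>}. c \<sigma> * \<sigma> x) = 0"
      using zero[of x] sum.remove[OF T(1) \<tau>, of "\<lambda>\<sigma>. c \<sigma> * \<sigma> x"] by simp
    with \<open>c \<tau> \<noteq> 0\<close> show ?thesis
      by (simp add: d_def sum_divide_distrib[symmetric] sum_negf field_simps)
  qed
  have \<tau>_pure: "\<tau> \<in> pure_traces P u0"
    using T(2) \<tau> by blast
  have le: "le_on P \<tau> (\<lambda>x. \<Sum>\<sigma>\<in>B. d \<sigma> * \<sigma> x)"
    unfolding le_on_def
  proof
    fix a assume a: "a \<in> P"
    have "(\<Sum>\<sigma>\<in>T - {\<tau>} - B. d \<sigma> * \<sigma> a) \<le> 0"
      using T(2) a pure_traces_positive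
      by (intro sum_nonpos) (auto simp: B_def positive_functional_def mult_nonpos_nonneg)
    moreover have "(\<Sum>\<sigma>\<in>T - {\<tau>}. d \<sigma> * \<sigma> a) = (\<Sum>\<sigma>\<in>B. d \<sigma> * \<sigma> a) + (\<Sum>\<sigma>\<in>T - {\<tau>} - B. d \<sigma> * \<sigma> a)"
      using T(1) by (subst sum.subset_diff[of B]) (auto simp: B_def)
    ultimately show "\<tau> a \<le> (\<Sum>\<sigma>\<in>B. d \<sigma> * \<sigma> a)"
      using \<tau>_eq[of a] by linarith
  qed
  have "finite B" "B \<subseteq> pure_traces P u0" "\<tau> \<notin> B"
    using T by (auto simp: B_def)
  from pure_trace_disjoint_from_others[OF this(1,2) \<tau>_pure this(3) _ pure_traces_positive[OF \<tau>_pure] _ le, of 1]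
  have "\<tau> = (\<lambda>_. 0)"
    by (auto simp: B_def le_on_def)
  then show False
    using states_unit[OF pure_traces_states[OF \<tau>_pure]] by simp
qed

lemma order_ideal_generated:
  assumes "y \<in> P"
  shows "order_ideal P {x. \<exists>m. nsmul m y + x \<in> P \<and> nsmul m y - x \<in> P}"
    (is "order_ideal P ?I")
proof -
  have my: "nsmul m y \<in> P" for m
    using nsmul_mem[OF po_group assms] .
  show ?thesis
    unfolding order_ideal_def
  proof (intro conjI ballI allI impI)
    show "0 \<in> ?I"
      using my by auto
  next
    fix a b assume "a \<in> ?I" "b \<in> ?I"
    then obtain ma mb where "nsmul ma y + a \<in> P" "nsmul ma y - a \<in> P" "nsmul mb y + b \<in> P" "nsmul mb y - b \<in> P"
      by blast
    moreover have "nsmul (ma + mb) y + (a - b) = (nsmul ma y + a) + (nsmul mb y - b)"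
      "nsmul (ma + mb) y - (a - b) = (nsmul ma y - a) + (nsmul mb y + b)"
      by (simp_all add: nsmul_add algebra_simps)
    ultimately have "nsmul (ma + mb) y + (a - b) \<in> P \<and> nsmul (ma + mb) y - (a - b) \<in> P"
      using add_mem by presburger
    then show "a - b \<in> ?I"
      by blast
  next
    fix a b assume "pleq P 0 a \<and> pleq P a b \<and> b \<in> ?I"
    then obtain m where "a \<in> P" "b - a \<in> P" "nsmul m y - b \<in> P"
      unfolding pleq_def by auto
    moreover have "nsmul m y - a = (nsmul m y - b) + (b - a)"
      by simp
    ultimately show "a \<in> ?I"
      using add_mem[OF my] add_mem by (intro CollectI exI[of _ m]) (metis add.commute)
  next
    fix g assume "g \<in> ?I"
    then obtain m where m: "nsmul m y + g \<in> P" "nsmul m y - g \<in> P"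
      by blast
    have "nsmul (m + m) y + (nsmul m y + g) = nsmul m y + (nsmul m y + (nsmul m y + g))"
      "nsmul (m + m) y - (nsmul m y + g) = nsmul m y - g"
      by (simp_all add: nsmul_add algebra_simps)
    then have "nsmul m y + g \<in> ?I"
      using add_mem my m by (intro CollectI exI[of _ "m + m"]) simp
    moreover have "nsmul m y \<in> ?I"
      using add_mem my zero_mem by (intro CollectI exI[of _ m]) simp
    ultimately show "\<exists>a b. a \<in> ?I \<inter> P \<and> b \<in> ?I \<inter> P \<and> g = a - b"
      using m(1) my by (intro exI[of _ "nsmul m y + g"] exI[of _ "nsmul m y"]) simp
  qed
qed

lemma simple_group_positive_is_order_unit:
  assumes "simple_group P" "y \<in> P" "y \<noteq> 0"
  obtains m where "nsmul m y - u0 \<in> P"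
proof -
  let ?I = "{x. \<exists>m. nsmul m y + x \<in> P \<and> nsmul m y - x \<in> P}"
  have "nsmul 1 y + y \<in> P" "nsmul 1 y - y \<in> P"
    using add_mem assms(2) zero_mem by simp_all
  then have "y \<in> ?I"
    by blast
  with assms have "?I = UNIV"
    using order_ideal_generated[OF assms(2)] unfolding simple_group_def by blast
  then show thesis
    using that by blast
qed

lemma states_positive_if_dominates_unit:
  assumes \<sigma>: "\<sigma> \<in> states P u0" and "nsmul m y - u0 \<in> P"
  shows "0 < \<sigma> y"
proof -
  have "0 \<le> \<sigma> (nsmul m y - u0)"
    using states_positive_functional[OF \<sigma>] assms(2) by (simp add: positive_functional_def)
  then have "1 \<le> real m * \<sigma> y"
    by (simp add: additive.diff[OF states_additive[OF \<sigma>]] additive_nsmul[OF states_additive[OF \<sigma>]]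
        states_unit[OF \<sigma>])
  then show ?thesis
    using mult_nonneg_nonpos[of "real m" "\<sigma> y"] by linarith
qed

lemma states_positive_on_nonzero:
  assumes "simple_group P" and "\<sigma> \<in> states P u0" and "y \<in> P" "y \<noteq> 0"
  shows "0 < \<sigma> y"
  using simple_group_positive_is_order_unit[OF assms(1,3,4)] states_positive_if_dominates_unit[OF assms(2)]
  by blast

lemma states_positive_on_order_unit:
  assumes "order_unit P u" and "\<sigma> \<in> states P u0"
  shows "0 < \<sigma> u"
  using assms states_positive_if_dominates_unit unfolding order_unit_def pleq_def by blast

lemma states_vanish_on_infinitesimals:
  assumes \<sigma>: "\<sigma> \<in> states P u0" and x: "x \<in> infinitesimals P u0"
  shows "\<sigma> x = 0"
proof (rule ccontr)
  assume "\<sigma> x \<noteq> 0"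
  then obtain q :: nat where q: "1 < real q * \<bar>\<sigma> x\<bar>"
    by (metis reals_Archimedean2 pos_divide_less_eq zero_less_abs_iff)
  then have "0 < q"
    by (cases q) auto
  with x have "pleq P (- nsmul 1 u0) (nsmul q x) \<and> pleq P (nsmul q x) (nsmul 1 u0)"
    unfolding infinitesimals_def by blast
  then have "nsmul q x + u0 \<in> P" "u0 - nsmul q x \<in> P"
    unfolding pleq_def by simp_all
  then have "0 \<le> real q * \<sigma> x + 1" "0 \<le> 1 - real q * \<sigma> x"
    using \<sigma> unfolding states_def
    by (auto simp: additive.diff[OF states_additive[OF \<sigma>]] additive.add[OF states_additive[OF \<sigma>]]
        additive_nsmul[OF states_additive[OF \<sigma>]])
  with q show False
    by (simp add: abs_if split: if_splits)
qed

lemma pure_trace_concentrated_part: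
  assumes T: "finite T" "T \<subseteq> pure_traces P u0" and \<tau>: "\<tau> \<in> pure_traces P u0" "\<tau> \<notin> T"
    and c: "\<And>\<sigma>. \<sigma> \<in> T \<Longrightarrow> 0 \<le> c \<sigma>" and "y \<in> P" "0 < e"
  obtains z where "z \<in> P" "y - z \<in> P" "\<tau> (y - z) < e" "(\<Sum>\<sigma>\<in>T. c \<sigma> * \<sigma> z) < e"
proof -
  define R where "R = (\<lambda>x. \<Sum>\<sigma>\<in>T. c \<sigma> * \<sigma> x)"
  have R: "positive_functional P R"
    unfolding R_def using T(2) c pure_traces_positive by (intro positive_functional_lin_comb) auto
  have "h = (\<lambda>_. 0)" if "positive_functional P h" "le_on P h \<tau>" "le_on P h R" for h
    using pure_trace_disjoint_from_others[OF T \<tau> c that(1), where r = 1] that(2,3) by (simp add: R_def)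
  then obtain z' where z': "z' \<in> P" "y - z' \<in> P" "\<tau> z' + R (y - z') < e"
    using meet_zero_approx[OF pure_traces_positive[OF \<tau>(1)] R] \<open>y \<in> P\<close> \<open>0 < e\<close> by blast
  moreover have "0 \<le> \<tau> z'" "0 \<le> R (y - z')"
    using z' pure_traces_positive[OF \<tau>(1)] R by (auto simp: positive_functional_def)
  ultimately show thesis
    by (intro that[of "y - z'"]) (auto simp: R_def)
qed

lemma pure_trace_small_positive_value:
  assumes "simple_group P" and \<tau>: "\<tau> \<in> pure_traces P u0" and \<tau>': "\<tau>' \<in> pure_traces P u0" "\<tau>' \<noteq> \<tau>"
    and "0 < e"
  obtains y where "y \<in> P" "0 < \<tau> y" "\<tau> y < e"
proof -
  have "0 < min e 1"
    using \<open>0 < e\<close> by simp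
  then obtain z where z: "z \<in> P" "u0 - z \<in> P" "\<tau>' (u0 - z) < min e 1" "\<tau> z < min e 1"
    using pure_trace_concentrated_part[of "{\<tau>}" \<tau>' "\<lambda>_. 1" u0 "min e 1"] \<tau> \<tau>' unit_mem by auto
  have "\<tau>' (u0 - z) = 1 - \<tau>' z"
    using states_unit[OF pure_traces_states[OF \<tau>'(1)]]
    by (simp add: additive.diff[OF states_additive[OF pure_traces_states[OF \<tau>'(1)]]])
  then have "z \<noteq> 0"
    using z(3) additive.zero[OF states_additive[OF pure_traces_states[OF \<tau>'(1)]]] by auto
  with z show thesis
    using that states_positive_on_nonzero[OF assms(1) pure_traces_states[OF \<tau>]] by force
qed

lemma no_integer_valued_combination_of_pure_traces:
  assumes "simple_group P" and T: "finite T" "T \<subseteq> pure_traces P u0"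
    and \<tau>: "\<tau> \<in> T" "\<beta> \<tau> \<noteq> 0" and \<tau>': "\<tau>' \<in> T" "\<tau>' \<noteq> \<tau>"
    and integral: "\<And>x. (\<Sum>\<sigma>\<in>T. \<beta> \<sigma> * \<sigma> x) \<in> \<int>"
  shows False
proof -
  have \<tau>_pure: "\<tau> \<in> pure_traces P u0"
    using T(2) \<tau>(1) by blast
  have \<tau>_additive: "additive \<tau>"
    using states_additive[OF pure_traces_states[OF \<tau>_pure]] .
  define b where "b = \<bar>\<beta> \<tau>\<bar>"
  have "0 < b"
    using \<tau>(2) by (simp add: b_def)
  have "\<tau>' \<in> pure_traces P u0" "0 < 1 / (2 * b)"
    using T(2) \<tau>'(1) \<open>0 < b\<close> by auto
  then obtain y where y: "y \<in> P" "0 < \<tau> y" "\<tau> y < 1 / (2 * b)"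
    using pure_trace_small_positive_value[OF assms(1) \<tau>_pure _ \<tau>'(2)] by blast
  define d where "d = b * \<tau> y"
  have d: "0 < d" "d < 1 / 2" "\<bar>\<beta> \<tau> * \<tau> y\<bar> = d"
    using y(2,3) \<open>0 < b\<close> by (auto simp: d_def b_def field_simps abs_mult)
  define e where "e = d / (2 * (b + 1))"
  have "0 < e"
    using d(1) \<open>0 < b\<close> by (simp add: e_def)
  have "b * e + e = (b + 1) * e"
    by (simp add: algebra_simps)
  also have "\<dots> = d / 2"
    using \<open>0 < b\<close> by (simp add: e_def field_simps)
  finally have "b * e + e = d / 2" .
  \<comment> \<open>z keeps almost all of the \<tau>-weight d of y and almost none of the other weights,
    so the integer \<Sum>\<sigma>\<in>T. \<beta> \<sigma> * \<sigma> z lies strictly between d / 2 and 1 in absolute value.\<close>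
  obtain z where z: "z \<in> P" "y - z \<in> P" "\<tau> (y - z) < e" "(\<Sum>\<sigma>\<in>T - {\<tau>}. \<bar>\<beta> \<sigma>\<bar> * \<sigma> z) < e"
    using pure_trace_concentrated_part[of "T - {\<tau>}" \<tau> "\<lambda>\<sigma>. \<bar>\<beta> \<sigma>\<bar>" y e] T \<tau>_pure y(1) \<open>0 < e\<close>
    by auto
  have "\<bar>\<Sum>\<sigma>\<in>T - {\<tau>}. \<beta> \<sigma> * \<sigma> z\<bar> \<le> (\<Sum>\<sigma>\<in>T - {\<tau>}. \<bar>\<beta> \<sigma>\<bar> * \<sigma> z)"
    using T(2) pure_traces_positive z(1)
    by (intro order_trans[OF sum_abs] sum_mono) (auto simp: abs_mult positive_functional_def)
  moreover have "\<bar>\<beta> \<tau> * \<tau> z - \<beta> \<tau> * \<tau> y\<bar> \<le> b * e"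
  proof -
    have "0 \<le> \<tau> (y - z)"
      using pure_traces_positive[OF \<tau>_pure] z(2) by (simp add: positive_functional_def)
    then have "\<bar>\<beta> \<tau> * \<tau> z - \<beta> \<tau> * \<tau> y\<bar> = b * \<tau> (y - z)"
      by (simp add: b_def additive.diff[OF \<tau>_additive] abs_mult right_diff_distrib[symmetric]
          abs_minus_commute)
    with z(3) \<open>0 < b\<close> show ?thesis
      by (simp add: mult_le_cancel_left_pos)
  qed
  moreover have "(\<Sum>\<sigma>\<in>T. \<beta> \<sigma> * \<sigma> z) = \<beta> \<tau> * \<tau> z + (\<Sum>\<sigma>\<in>T - {\<tau>}. \<beta> \<sigma> * \<sigma> z)"
    using sum.remove[OF T(1) \<tau>(1)] .
  ultimately have "d / 2 < \<bar>\<Sum>\<sigma>\<in>T. \<beta> \<sigma> * \<sigma> z\<bar>" "\<bar>\<Sum>\<sigma>\<in>T. \<beta> \<sigma> * \<sigma> z\<bar> < 1"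
    using z(4) d \<open>b * e + e = d / 2\<close> by linarith+
  then show False
    using integral[of z] d(1) by (auto dest: Ints_nonzero_abs_less1)
qed

lemma states_scale_constant_value:
  assumes u: "order_unit P u" and const: "\<forall>\<sigma>\<in>states P u. \<forall>\<tau>\<in>states P u. \<sigma> g = \<tau> g"
    and \<sigma>: "\<sigma> \<in> states P u" and \<rho>: "\<rho> \<in> states P u0"
  shows "\<rho> g = \<sigma> g * \<rho> u"
proof -
  have "0 < \<rho> u"
    using states_positive_on_order_unit[OF u \<rho>] .
  moreover have "(\<lambda>x. \<rho> x / \<rho> u) \<in> states P u"
    using normalized_positive_functional_state[OF states_positive_functional[OF \<rho>] calculation] .
  then have "\<rho> g / \<rho> u = \<sigma> g"
    using const \<sigma> by force
  ultimately show ?thesis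
    by (simp add: field_simps)
qed

end

section \<open>Dual bases of real functions\<close>

definition fun_span :: "nat \<Rightarrow> (nat \<Rightarrow> 'a \<Rightarrow> real) \<Rightarrow> ('a \<Rightarrow> real) set" where
  "fun_span k f = {\<lambda>x. \<Sum>i<k. C i * f i x | C. True}"

definition fun_lin_indep :: "nat \<Rightarrow> (nat \<Rightarrow> 'a \<Rightarrow> real) \<Rightarrow> bool" where
  "fun_lin_indep k f \<longleftrightarrow> (\<forall>C. (\<forall>x. (\<Sum>i<k. C i * f i x) = 0) \<longrightarrow> (\<forall>i<k. C i = 0))"

lemma fun_span_zero: "(\<lambda>_. 0) \<in> fun_span k f"
  unfolding fun_span_def by (intro CollectI exI[of _ "\<lambda>_. 0"]) simp

lemma fun_span_add:
  assumes "h1 \<in> fun_span k f" "h2 \<in> fun_span k f"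
  shows "(\<lambda>x. h1 x + h2 x) \<in> fun_span k f"
proof -
  obtain C1 C2 where "h1 = (\<lambda>x. \<Sum>i<k. C1 i * f i x)" "h2 = (\<lambda>x. \<Sum>i<k. C2 i * f i x)"
    using assms unfolding fun_span_def by blast
  then show ?thesis
    unfolding fun_span_def
    by (intro CollectI exI[of _ "\<lambda>i. C1 i + C2 i"]) (simp add: distrib_right sum.distrib)
qed

lemma fun_span_scale:
  assumes "h \<in> fun_span k f"
  shows "(\<lambda>x. c * h x) \<in> fun_span k f"
proof -
  obtain C where "h = (\<lambda>x. \<Sum>i<k. C i * f i x)"
    using assms unfolding fun_span_def by blast
  then show ?thesis
    unfolding fun_span_def
    by (intro CollectI exI[of _ "\<lambda>i. c * C i"]) (simp add: sum_distrib_left mult.assoc)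
qed

lemma fun_span_diff: "h1 \<in> fun_span k f \<Longrightarrow> h2 \<in> fun_span k f \<Longrightarrow> (\<lambda>x. h1 x - h2 x) \<in> fun_span k f"
  using fun_span_add[OF _ fun_span_scale[of h2 k f "- 1"], of h1] by simp

lemma fun_span_sum:
  "finite J \<Longrightarrow> (\<And>j. j \<in> J \<Longrightarrow> a j \<in> fun_span k f) \<Longrightarrow> (\<lambda>x. \<Sum>j\<in>J. c j * a j x) \<in> fun_span k f"
proof (induction J rule: finite_induct)
  case empty
  then show ?case
    using fun_span_zero by simp
next
  case (insert j J)
  then show ?case
    using fun_span_add[OF fun_span_scale[of "a j" k f "c j"]] by simp
qed

lemma sum_lessThan_upd:
  fixes f :: "nat \<Rightarrow> 'a \<Rightarrow> real"
  shows "(\<Sum>i<k. (C(k := v)) i * f i x) = (\<Sum>i<k. C i * f i x)"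
  by (intro sum.cong) auto

lemma fun_span_Suc:
  assumes "h \<in> fun_span k f"
  shows "h \<in> fun_span (Suc k) f"
proof -
  obtain C where "h = (\<lambda>x. \<Sum>i<k. C i * f i x)"
    using assms unfolding fun_span_def by blast
  then show ?thesis
    unfolding fun_span_def by (intro CollectI exI[of _ "C(k := 0)"]) (simp add: sum_lessThan_upd)
qed

lemma fun_span_generator: "f k \<in> fun_span (Suc k) f"
  unfolding fun_span_def by (intro CollectI exI[of _ "\<lambda>i. if i = k then 1 else 0"]) auto

lemma fun_lin_indep_Suc: "fun_lin_indep (Suc k) f \<Longrightarrow> fun_lin_indep k f"
  unfolding fun_lin_indep_def
proof (intro allI impI)
  fix C i
  assume indep: "\<forall>C. (\<forall>x. (\<Sum>i<Suc k. C i * f i x) = 0) \<longrightarrow> (\<forall>i<Suc k. C i = 0)"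
    and "\<forall>x. (\<Sum>i<k. C i * f i x) = 0" and "i < k"
  then have "\<forall>x. (\<Sum>i<Suc k. (C(k := 0)) i * f i x) = 0"
    by (simp add: sum_lessThan_upd)
  with indep[rule_format, of "C(k := 0)" i] \<open>i < k\<close> have "(C(k := 0)) i = 0"
    by simp
  moreover have "i \<noteq> k"
    using \<open>i < k\<close> by simp
  ultimately show "C i = 0"
    by simp
qed

lemma fun_lin_indep_not_in_span: "fun_lin_indep (Suc k) f \<Longrightarrow> f k \<notin> fun_span k f"
proof
  assume indep: "fun_lin_indep (Suc k) f" and "f k \<in> fun_span k f"
  then obtain C where "f k = (\<lambda>x. \<Sum>i<k. C i * f i x)"
    unfolding fun_span_def by blast
  then have "\<forall>x. (\<Sum>i<Suc k. (C(k := - 1)) i * f i x) = 0"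
    by (simp add: sum_lessThan_upd)
  with indep have "(C(k := - 1)) k = 0"
    unfolding fun_lin_indep_def by blast
  then show False
    by simp
qed

lemma dual_basis_remainder:
  assumes indep: "fun_lin_indep (Suc k) f" and span: "\<And>j. j < k \<Longrightarrow> a j \<in> fun_span k f"
    and dual: "\<And>j l. j < k \<Longrightarrow> l < k \<Longrightarrow> a j (y l) = (if j = l then 1 else 0)"
  obtains g where "g \<in> fun_span (Suc k) f" "g \<noteq> (\<lambda>_. 0)" "\<And>l. l < k \<Longrightarrow> g (y l) = 0"
    "k = 0 \<Longrightarrow> g = f 0"
proof -
  \<comment> \<open>Project f k along the points y j onto the span of the a j.\<close>
  define p where "p = (\<lambda>x. \<Sum>j<k. f k (y j) * a j x)"
  have p_span: "p \<in> fun_span k f"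
    unfolding p_def using span by (intro fun_span_sum) auto
  have "p (y l) = f k (y l)" if "l < k" for l
  proof -
    have "p (y l) = (\<Sum>j<k. if j = l then f k (y j) else 0)"
      unfolding p_def using that dual by (intro sum.cong) auto
    with that show ?thesis
      by simp
  qed
  moreover have "(\<lambda>x. f k x - p x) \<noteq> (\<lambda>_. 0)"
  proof
    assume "(\<lambda>x. f k x - p x) = (\<lambda>_. 0)"
    then have "f k = p"
      by (auto simp: fun_eq_iff)
    with p_span fun_lin_indep_not_in_span[OF indep] show False
      by simp
  qed
  moreover have "(\<lambda>x. f k x - p x) \<in> fun_span (Suc k) f"
    by (intro fun_span_diff fun_span_generator fun_span_Suc p_span)
  moreover have "k = 0 \<Longrightarrow> (\<lambda>x. f k x - p x) = f 0"
    by (simp add: p_def)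
  ultimately show thesis
    using that[of "\<lambda>x. f k x - p x"] by simp
qed

lemma dual_basis_exists:
  assumes "fun_lin_indep k f" and "f 0 u \<noteq> 0"
  obtains y a where "\<And>j. j < k \<Longrightarrow> a j \<in> fun_span k f"
    "\<And>j l. j < k \<Longrightarrow> l < k \<Longrightarrow> a j (y l) = (if j = l then 1 else 0)" and "y 0 = u"
  using assms(1)
proof (induction k arbitrary: thesis)
  case 0
  show ?case
    by (rule "0.prems"(1)[of _ "\<lambda>_. u"]) auto
next
  case (Suc k)
  obtain y a where span: "\<And>j. j < k \<Longrightarrow> a j \<in> fun_span k f"
    and dual: "\<And>j l. j < k \<Longrightarrow> l < k \<Longrightarrow> a j (y l) = (if j = l then 1 else 0)" and "y 0 = u"
    using Suc.IH[OF _ fun_lin_indep_Suc[OF Suc.prems(2)]] by blast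
  obtain g where g_span: "g \<in> fun_span (Suc k) f" and "g \<noteq> (\<lambda>_. 0)"
    and g_y: "\<And>l. l < k \<Longrightarrow> g (y l) = 0" and g_0: "k = 0 \<Longrightarrow> g = f 0"
    using dual_basis_remainder[OF Suc.prems(2) span dual] by blast
  obtain w where w: "g w \<noteq> 0" and w_u: "k = 0 \<Longrightarrow> w = u"
  proof (cases "k = 0")
    case True
    with g_0 assms(2) show thesis
      using that by blast
  next
    case False
    with \<open>g \<noteq> (\<lambda>_. 0)\<close> show thesis
      using that by fastforce
  qed
  define b where "b = (\<lambda>x. inverse (g w) * g x)"
  define a' where "a' = (\<lambda>j. if j = k then b else (\<lambda>x. a j x - a j w * b x))"
  have b_span: "b \<in> fun_span (Suc k) f"
    unfolding b_def using g_span by (rule fun_span_scale)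
  show ?case
  proof (rule Suc.prems(1))
    show "a' j \<in> fun_span (Suc k) f" if "j < Suc k" for j
      using that b_span span fun_span_Suc unfolding a'_def
      by (auto intro!: fun_span_diff fun_span_scale simp: less_Suc_eq)
    show "a' j ((y(k := w)) l) = (if j = l then 1 else 0)" if "j < Suc k" "l < Suc k" for j l
      using that w g_y dual by (auto simp: a'_def b_def less_Suc_eq)
    show "(y(k := w)) 0 = u"
      using \<open>y 0 = u\<close> w_u by simp
  qed
qed

lemma sum_lessThan_add:
  fixes n K :: nat
  shows "(\<Sum>i<n + K. g i) = (\<Sum>i<n. g i) + (\<Sum>i<K. g (n + i))"
  by (induction K) (simp_all add: add.assoc)

section \<open>Integer relations modulo a subgroup\<close>

lemma Rats_if_int_linear_relation:
  fixes c :: real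
  assumes "of_int k + of_int l * c = 0" and "l \<noteq> 0"
  shows "c \<in> \<rat>"
proof -
  have "c = - of_int k / of_int l"
    using assms by (simp add: field_simps)
  then show ?thesis
    by simp
qed

context
  fixes I :: "'g::ab_group_add set" and n :: nat and a :: "nat \<Rightarrow> 'g \<Rightarrow> real" and y :: "nat \<Rightarrow> 'g"
  assumes dual_additive: "\<And>j. j < n \<Longrightarrow> additive (a j)"
    and dual_vanish: "\<And>j x. j < n \<Longrightarrow> x \<in> I \<Longrightarrow> a j x = 0"
    and dual_basis: "\<And>j l. j < n \<Longrightarrow> l < n \<Longrightarrow> a j (y l) = (if j = l then 1 else 0)"
begin

lemma dual_coordinates_sum:
  assumes "j < n"
  shows "(\<Sum>i<n. of_int (m i) * a j (y i)) = of_int (m j)"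
proof -
  have "(\<Sum>i<n. of_int (m i) * a j (y i)) = (\<Sum>i<n. if i = j then of_int (m i) else 0)"
    using assms by (intro sum.cong) (auto simp: dual_basis)
  with assms show ?thesis
    by simp
qed

lemma dependence_in_dual_coordinates:
  fixes z :: "nat \<Rightarrow> 'g" and K :: nat
  assumes "\<not> indep_mod I (n + K) (\<lambda>i. if i < n then y i else z (i - n))"
  obtains m :: "nat \<Rightarrow> int" where "\<exists>i<n + K. m i \<noteq> 0"
    "\<And>j. j < n \<Longrightarrow> of_int (m j) + (\<Sum>i<K. of_int (m (n + i)) * a j (z i)) = 0"
proof -
  let ?x = "\<lambda>i. if i < n then y i else z (i - n)"
  obtain m where m: "(\<Sum>i<n + K. zsmul (m i) (?x i)) \<in> I" "\<exists>i<n + K. m i \<noteq> 0"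
    using assms unfolding indep_mod_def by blast
  have "of_int (m j) + (\<Sum>i<K. of_int (m (n + i)) * a j (z i)) = 0" if "j < n" for j
  proof -
    have "0 = a j (\<Sum>i<n + K. zsmul (m i) (?x i))"
      using dual_vanish[OF that m(1)] by simp
    also have "\<dots> = (\<Sum>i<n + K. of_int (m i) * a j (?x i))"
      by (simp add: additive.sum[OF dual_additive[OF that]] additive_zsmul[OF dual_additive[OF that]])
    also have "\<dots> = (\<Sum>i<n. of_int (m i) * a j (?x i)) + (\<Sum>i<K. of_int (m (n + i)) * a j (z i))"
      by (simp add: sum_lessThan_add)
    also have "(\<Sum>i<n. of_int (m i) * a j (?x i)) = (\<Sum>i<n. of_int (m i) * a j (y i))"
      by (intro sum.cong) auto
    finally show ?thesis
      using dual_coordinates_sum[OF that] by simp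
  qed
  with m(2) show thesis
    using that by blast
qed

lemma rational_if_quotient_rank_eq:
  assumes "quotient_rank_eq I n" and "0 < n" and g: "\<And>j. j < n \<Longrightarrow> a j g = (if j = 0 then c else 0)"
  shows "c \<in> \<rat>"
proof -
  have "\<not> indep_mod I (n + 1) (\<lambda>i. if i < n then y i else (\<lambda>_. g) (i - n))"
    using assms(1) unfolding quotient_rank_eq_def by simp
  then obtain m where m: "\<exists>i<n + 1. m i \<noteq> 0"
    and rel: "\<And>j. j < n \<Longrightarrow> of_int (m j) + of_int (m n) * a j g = 0"
    by (rule dependence_in_dual_coordinates) simp
  have "m n \<noteq> 0"
  proof
    assume "m n = 0"
    then have "m i = 0" if "i < n + 1" for i
      using rel[of i] that by (cases "i = n") auto
    with m show False
      by blast
  qed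
  moreover have "of_int (m 0) + of_int (m n) * c = 0"
    using rel[OF \<open>0 < n\<close>] g[OF \<open>0 < n\<close>] by simp
  ultimately show ?thesis
    using Rats_if_int_linear_relation by blast
qed

lemma rational_valued_if_quotient_rank_Suc:
  assumes "quotient_rank_eq I (n + 1)" and j: "0 < j" "j < n"
    and g: "\<And>j. j < n \<Longrightarrow> a j g = (if j = 0 then c else 0)" and "c \<notin> \<rat>"
  shows "a j x \<in> \<rat>"
proof -
  have "\<not> indep_mod I (n + 2) (\<lambda>i. if i < n then y i else (\<lambda>i. if i = 0 then g else x) (i - n))"
    using assms(1) unfolding quotient_rank_eq_def by simp
  then obtain m where m: "\<exists>i<n + 2. m i \<noteq> 0"
    and rel: "\<And>j. j < n \<Longrightarrow> of_int (m j) + of_int (m n) * a j g + of_int (m (Suc n)) * a j x = 0"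
    by (rule dependence_in_dual_coordinates) (simp add: numeral_2_eq_2 add.assoc)
  have "m (Suc n) \<noteq> 0"
  proof
    assume "m (Suc n) = 0"
    then have "of_int (m 0) + of_int (m n) * c = 0"
      using rel[of 0] g[of 0] j by simp
    then have "m n = 0"
      using \<open>c \<notin> \<rat>\<close> Rats_if_int_linear_relation by blast
    then have "m i = 0" if "i < n + 2" for i
      using rel[of i] g[of i] \<open>m (Suc n) = 0\<close> that by (cases "i < n") (auto simp: less_Suc_eq)
    with m show False
      by blast
  qed
  moreover have "of_int (m j) + of_int (m (Suc n)) * a j x = 0"
    using rel[OF j(2)] g[OF j(2)] j(1) by simp
  ultimately show ?thesis
    using Rats_if_int_linear_relation by blast
qed

end

lemma common_denominator:
  fixes h :: "'a \<Rightarrow> real"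
  assumes "finite F" "\<And>v. v \<in> F \<Longrightarrow> h v \<in> \<rat>"
  obtains D :: int where "0 < D" "\<And>v. v \<in> F \<Longrightarrow> of_int D * h v \<in> \<int>"
  using assms
proof (induction F arbitrary: thesis rule: finite_induct)
  case empty
  show ?case
    by (rule empty.prems(1)[of 1]) auto
next
  case (insert v F)
  obtain D where D: "0 < D" "\<And>w. w \<in> F \<Longrightarrow> of_int D * h w \<in> \<int>"
    using insert.IH insert.prems(2) by blast
  obtain p q where pq: "0 < q" "h v = of_int p / of_int q"
    using insert.prems(2)[of v] by (auto elim: Rats_cases')
  have "of_int (D * q) * h w \<in> \<int>" if "w \<in> insert v F" for w
  proof (cases "w = v")
    case True
    then have "of_int (D * q) * h w = of_int (D * p)"
      using pq by simp
    then show ?thesis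
      by (metis Ints_of_int)
  next
    case False
    then have "of_int (D * q) * h w = of_int q * (of_int D * h w)"
      by simp
    then show ?thesis
      using D(2) False that by (metis Ints_mult Ints_of_int insertE)
  qed
  with D(1) pq(1) show ?case
    by (intro insert.prems(1)[of "D * q"]) auto
qed

lemma integral_multiple_if_rational_valued:
  fixes h :: "'g::ab_group_add \<Rightarrow> real"
  assumes "additive h" and vanish: "\<And>x. x \<in> I \<Longrightarrow> h x = 0" and "quotient_fin_gen I"
    and rational: "\<And>x. h x \<in> \<rat>"
  obtains D :: int where "0 < D" "\<And>x. of_int D * h x \<in> \<int>"
proof -
  obtain F where F: "finite F" "\<And>x. \<exists>m::'g \<Rightarrow> int. x - (\<Sum>v\<in>F. zsmul (m v) v) \<in> I"
    using \<open>quotient_fin_gen I\<close> unfolding quotient_fin_gen_def by blast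
  obtain D where D: "0 < D" "\<And>v. v \<in> F \<Longrightarrow> of_int D * h v \<in> \<int>"
    using common_denominator[OF F(1), of h] rational by blast
  have "of_int D * h x \<in> \<int>" for x
  proof -
    obtain m :: "'g \<Rightarrow> int" where "x - (\<Sum>v\<in>F. zsmul (m v) v) \<in> I"
      using F(2) by blast
    then have "h x - h (\<Sum>v\<in>F. zsmul (m v) v) = 0"
      using vanish additive.diff[OF \<open>additive h\<close>] by metis
    then have "h x = (\<Sum>v\<in>F. of_int (m v) * h v)"
      by (simp add: additive.sum[OF \<open>additive h\<close>] additive_zsmul[OF \<open>additive h\<close>])
    then have "of_int D * h x = (\<Sum>v\<in>F. of_int (m v) * (of_int D * h v))"
      by (simp add: sum_distrib_left mult.left_commute)
    also have "\<dots> \<in> \<int>"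
      using D(2) by (intro Ints_sum) (blast intro: Ints_mult Ints_of_int)
    finally show ?thesis .
  qed
  with D(1) show thesis
    using that by blast
qed

lemma sum_bij_betw_reindex:
  fixes f :: "nat \<Rightarrow> 'a \<Rightarrow> real"
  assumes "bij_betw f {..<n} T"
  shows "(\<Sum>i<n. C i * f i x) = (\<Sum>\<sigma>\<in>T. C (inv_into {..<n} f \<sigma>) * \<sigma> x)"
  using sum.reindex_bij_betw[OF assms, of "\<lambda>\<sigma>. C (inv_into {..<n} f \<sigma>) * \<sigma> x"]
    bij_betw_inv_into_left[OF assms] by simp

lemma additive_fun_span:
  "(\<And>i. i < n \<Longrightarrow> additive (f i)) \<Longrightarrow> h \<in> fun_span n f \<Longrightarrow> additive h"
  unfolding fun_span_def using additive_lin_comb[of "{..<n}" f] by auto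

lemma fun_span_vanishing:
  "(\<And>i. i < n \<Longrightarrow> f i x = 0) \<Longrightarrow> h \<in> fun_span n f \<Longrightarrow> h x = 0"
  unfolding fun_span_def by auto

context unital_riesz_group
begin

lemma pure_traces_fun_lin_indep:
  assumes f: "bij_betw f {..<n} (pure_traces P u0)"
  shows "fun_lin_indep n f"
  unfolding fun_lin_indep_def
proof (intro allI impI)
  fix C i
  assume zero: "\<forall>x. (\<Sum>i<n. C i * f i x) = 0" and "i < n"
  have "finite (pure_traces P u0)"
    using bij_betw_finite[OF f] by simp
  moreover have "(\<Sum>\<sigma>\<in>pure_traces P u0. C (inv_into {..<n} f \<sigma>) * \<sigma> x) = 0" for x
    using zero sum_bij_betw_reindex[OF f, of C x] by simp
  moreover have "f i \<in> pure_traces P u0"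
    using bij_betw_apply[OF f] \<open>i < n\<close> by blast
  ultimately have "C (inv_into {..<n} f (f i)) = 0"
    by (rule pure_traces_linearly_independent[OF _ subset_refl])
  then show "C i = 0"
    using bij_betw_inv_into_left[OF f] \<open>i < n\<close> by simp
qed

lemma bij_pure_traces_states:
  assumes "bij_betw f {..<n} (pure_traces P u0)" "i < n"
  shows "f i \<in> states P u0"
  using bij_betw_apply[OF assms(1)] assms(2) by (auto intro: pure_traces_states)

lemma dual_basis_adapted_to_order_unit:
  assumes f: "bij_betw f {..<n} (pure_traces P u0)" and "0 < n" and u: "order_unit P u"
    and const: "\<forall>\<sigma>\<in>states P u. \<forall>\<tau>\<in>states P u. \<sigma> g = \<tau> g" and \<sigma>: "\<sigma> \<in> states P u"
  obtains a y where "\<And>j. j < n \<Longrightarrow> a j \<in> fun_span n f" "\<And>j. j < n \<Longrightarrow> additive (a j)"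
    "\<And>j x. j < n \<Longrightarrow> x \<in> infinitesimals P u0 \<Longrightarrow> a j x = 0"
    "\<And>j l. j < n \<Longrightarrow> l < n \<Longrightarrow> a j (y l) = (if j = l then 1 else 0)"
    "\<And>j. j < n \<Longrightarrow> a j g = (if j = 0 then \<sigma> g else 0)"
proof -
  note states = bij_pure_traces_states[OF f]
  have "f 0 u \<noteq> 0"
    using states_positive_on_order_unit[OF u states[OF \<open>0 < n\<close>]] by simp
  then obtain y a where span: "\<And>j. j < n \<Longrightarrow> a j \<in> fun_span n f"
    and dual: "\<And>j l. j < n \<Longrightarrow> l < n \<Longrightarrow> a j (y l) = (if j = l then 1 else 0)" and "y 0 = u"
    using dual_basis_exists[OF pure_traces_fun_lin_indep[OF f]] by blast
  have "a j g = \<sigma> g * a j u" if j: "j < n" for j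
  proof -
    obtain C where C: "a j = (\<lambda>x. \<Sum>i<n. C i * f i x)"
      using span[OF j] unfolding fun_span_def by blast
    have "a j g = (\<Sum>i<n. \<sigma> g * (C i * f i u))"
      unfolding C using states_scale_constant_value[OF u const \<sigma> states] by (intro sum.cong) auto
    then show ?thesis
      by (simp add: C sum_distrib_left)
  qed
  with dual \<open>y 0 = u\<close> \<open>0 < n\<close> show thesis
    using additive_fun_span[OF states_additive[OF states] span]
      fun_span_vanishing[OF states_vanish_on_infinitesimals[OF states] span]
    by (intro that[OF span _ _ dual]) auto
qed

lemma no_rational_valued_fun_span_of_pure_traces:
  assumes "simple_group P" and f: "bij_betw f {..<n} (pure_traces P u0)" and "1 < n"
    and "quotient_fin_gen (infinitesimals P u0)"
    and h: "h \<in> fun_span n f" "h x0 \<noteq> 0" and rational: "\<And>x. h x \<in> \<rat>"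
  shows False
proof -
  let ?T = "pure_traces P u0"
  note states = bij_pure_traces_states[OF f]
  obtain D :: int where "0 < D" and integral: "\<And>x. of_int D * h x \<in> \<int>"
    using integral_multiple_if_rational_valued[OF additive_fun_span[OF states_additive[OF states] h(1)]
        fun_span_vanishing[OF states_vanish_on_infinitesimals[OF states] h(1)]
        \<open>quotient_fin_gen _\<close> rational] by blast
  obtain C where C: "h = (\<lambda>x. \<Sum>i<n. C i * f i x)"
    using h(1) unfolding fun_span_def by blast
  define \<beta> where "\<beta> \<sigma> = of_int D * C (inv_into {..<n} f \<sigma>)" for \<sigma>
  have sums: "of_int D * h x = (\<Sum>\<sigma>\<in>?T. \<beta> \<sigma> * \<sigma> x)" for x
    unfolding C \<beta>_def sum_bij_betw_reindex[OF f] by (simp add: sum_distrib_left mult.assoc)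
  have "\<exists>\<tau>\<in>?T. \<beta> \<tau> \<noteq> 0"
  proof (rule ccontr)
    assume "\<not> ?thesis"
    then have "of_int D * h x0 = 0"
      using sums[of x0] by simp
    with h(2) \<open>0 < D\<close> show False
      by simp
  qed
  then obtain \<tau> where \<tau>: "\<tau> \<in> ?T" "\<beta> \<tau> \<noteq> 0"
    by blast
  have "finite ?T" "card (?T - {\<tau>}) = n - 1"
    using bij_betw_finite[OF f] bij_betw_same_card[OF f] \<tau>(1) by auto
  with \<open>1 < n\<close> have "?T - {\<tau>} \<noteq> {}"
    by (intro notI) simp
  then obtain \<tau>' where \<tau>': "\<tau>' \<in> ?T" "\<tau>' \<noteq> \<tau>"
    by blast
  have "(\<Sum>\<sigma>\<in>?T. \<beta> \<sigma> * \<sigma> x) \<in> \<int>" for x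
    using integral[of x] sums[of x] by simp
  then show False
    by (rule no_integer_valued_combination_of_pure_traces[where \<beta> = \<beta>, OF assms(1) \<open>finite ?T\<close> subset_refl \<tau> \<tau>'])
qed

end

theorem mainTheorem15:
  fixes P :: "'g::ab_group_add set" and u0 :: 'g and n :: nat
  assumes "dimension_group P" and "simple_group P"
    and "order_unit P u0"
    and "finite (pure_traces P u0)" and "card (pure_traces P u0) = n" and "n > 1"
    and "quotient_rank_eq (infinitesimals P u0) n
         \<or> (quotient_rank_eq (infinitesimals P u0) (n + 1) \<and> quotient_fin_gen (infinitesimals P u0))"
  shows "globally_irrationally_miscible P"
  unfolding globally_irrationally_miscible_def irrationally_miscible_def
proof (intro allI impI ballI)
  interpret unital_riesz_group P u0
    using assms(1,3) by unfold_locales (auto simp: dimension_group_def)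
  obtain f where f: "bij_betw f {..<n} (pure_traces P u0)"
    using ex_bij_betw_nat_finite[OF assms(4)] assms(5) by (auto simp: atLeast0LessThan)
  have "0 < n"
    using assms(6) by simp
  fix u g \<sigma>
  assume "order_unit P u" "\<forall>\<sigma>\<in>states P u. \<forall>\<tau>\<in>states P u. \<sigma> g = \<tau> g" "\<sigma> \<in> states P u"
  from dual_basis_adapted_to_order_unit[OF f \<open>0 < n\<close> this]
  obtain a y where span: "\<And>j. j < n \<Longrightarrow> a j \<in> fun_span n f"
    and coordinates: "\<And>j. j < n \<Longrightarrow> additive (a j)"
      "\<And>j x. j < n \<Longrightarrow> x \<in> infinitesimals P u0 \<Longrightarrow> a j x = 0"
      "\<And>j l. j < n \<Longrightarrow> l < n \<Longrightarrow> a j (y l) = (if j = l then 1 else 0)"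
    and g: "\<And>j. j < n \<Longrightarrow> a j g = (if j = 0 then \<sigma> g else 0)"
    by blast
  show "\<sigma> g \<in> \<rat>"
  proof (rule ccontr)
    assume irrational: "\<sigma> g \<notin> \<rat>"
    with assms(6,7) rational_if_quotient_rank_eq[OF coordinates _ _ g]
    have rank: "quotient_rank_eq (infinitesimals P u0) (n + 1)"
      and fin_gen: "quotient_fin_gen (infinitesimals P u0)"
      by auto
    have "a 1 (y 1) \<noteq> 0"
      using coordinates(3)[OF assms(6) assms(6)] by simp
    moreover have "a 1 x \<in> \<rat>" for x
      by (rule rational_valued_if_quotient_rank_Suc[OF coordinates rank zero_less_one assms(6) g irrational])
    ultimately show False
      by (rule no_rational_valued_fun_span_of_pure_traces[OF assms(2) f assms(6) fin_gen span[OF assms(6)]])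
  qed
qed

end
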